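(* Let $i \geq 1$ and let $\psi$ be an $i$-nice $n$-dimensional unique sink orientation. Started at any vertex of $\psi$, the Random Edge algorithm performs an expected number of at most $O(n^{i+1})$ steps (before reaching the global sink).
   Context: Let $Q^n = 2^{[n]}$ be the vertex set of the $n$-cube, with $u,v$ adjacent iff $|u\oplus v|=1$; faces are $F_{J,v}=\{u : v\oplus u\subseteq J\}$ for $J\subseteq[n]$. A unique sink orientation (USO) is an orientation of the cube's edges such that every nonempty face has a unique sink (vertex with no outgoing edges within the face). The outmap $s_\psi(v)$ is the set of coordinates $j$ such that the edge $\{v,v\oplus\{j\}\}$ is directed away from $v$; the global sink is the vertex $t$ with $s_\psi(t)=\emptyset$. Write $v\rightsquigarrow u$ if there is a directed path from $v$ to $u$, and let $d(v,u)$ be the length of a shortest directed path from $v$ to $u$ ($\infty$ if none). The reachmap is $r_\psi(v)=s_\psi(v)\cup\{j : \exists u,\ v\rightsquigarrow u,\ j\in s_\psi(u)\}$. A vertex $v$ is $i$-covered by $u$ if $d(v,u)\le i$ and $r_\psi(u)\subsetneq r_\psi(v)$. The USO is $i$-nice if every vertex other than the global sink is $i$-covered by some vertex. Random Edge: at the current vertex, if it is not the global sink, choose an outgoing edge uniformly at random and move to its other endpoint; repeat. *)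

theory Defs
  imports "HOL-Library.Extended_Nonnegative_Real"
begin

text \<open>Vertices of the n-cube are subsets of {0..<n}. An orientation is given by its
outmap s: s v is the set of coordinates j such that the edge {v, v xor {j}} is
directed away from v.\<close>

definition sdiff :: "nat set \<Rightarrow> nat set \<Rightarrow> nat set" where
  "sdiff A B = (A - B) \<union> (B - A)"

definition cube :: "nat \<Rightarrow> nat set set" where
  "cube n = Pow {..<n}"

definition is_orientation :: "nat \<Rightarrow> (nat set \<Rightarrow> nat set) \<Rightarrow> bool" where
  "is_orientation n s \<longleftrightarrow>
     (\<forall>v\<in>cube n. s v \<subseteq> {..<n} \<and>
        (\<forall>j<n. j \<in> s v \<longleftrightarrow> j \<notin> s (sdiff v {j})))"

definition face :: "nat \<Rightarrow> nat set \<Rightarrow> nat set \<Rightarrow> nat set set" where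
  "face n J v = {u \<in> cube n. sdiff v u \<subseteq> J}"

definition is_face_sink :: "nat \<Rightarrow> (nat set \<Rightarrow> nat set) \<Rightarrow> nat set \<Rightarrow> nat set \<Rightarrow> nat set \<Rightarrow> bool" where
  "is_face_sink n s J v u \<longleftrightarrow> u \<in> face n J v \<and> s u \<inter> J = {}"

definition USO :: "nat \<Rightarrow> (nat set \<Rightarrow> nat set) \<Rightarrow> bool" where
  "USO n s \<longleftrightarrow> is_orientation n s \<and>
     (\<forall>J. J \<subseteq> {..<n} \<longrightarrow> (\<forall>v\<in>cube n. \<exists>!u. is_face_sink n s J v u))"

definition arcs :: "nat \<Rightarrow> (nat set \<Rightarrow> nat set) \<Rightarrow> (nat set \<times> nat set) set" where
  "arcs n s = {(v, sdiff v {j}) | v j. v \<in> cube n \<and> j \<in> s v}"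

definition reaches :: "nat \<Rightarrow> (nat set \<Rightarrow> nat set) \<Rightarrow> nat set \<Rightarrow> nat set \<Rightarrow> bool" where
  "reaches n s v u \<longleftrightarrow> (v, u) \<in> (arcs n s)\<^sup>*"

definition dist_le :: "nat \<Rightarrow> (nat set \<Rightarrow> nat set) \<Rightarrow> nat set \<Rightarrow> nat set \<Rightarrow> nat \<Rightarrow> bool" where
  "dist_le n s v u k \<longleftrightarrow> (\<exists>m\<le>k. (v, u) \<in> (arcs n s) ^^ m)"

definition reachmap :: "nat \<Rightarrow> (nat set \<Rightarrow> nat set) \<Rightarrow> nat set \<Rightarrow> nat set" where
  "reachmap n s v = s v \<union> {j. \<exists>u. reaches n s v u \<and> j \<in> s u}"

definition covered :: "nat \<Rightarrow> (nat set \<Rightarrow> nat set) \<Rightarrow> nat \<Rightarrow> nat set \<Rightarrow> nat set \<Rightarrow> bool" where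
  "covered n s i v u \<longleftrightarrow> dist_le n s v u i \<and> reachmap n s u \<subset> reachmap n s v"

definition nice :: "nat \<Rightarrow> (nat set \<Rightarrow> nat set) \<Rightarrow> nat \<Rightarrow> bool" where
  "nice n s i \<longleftrightarrow> (\<forall>v\<in>cube n. s v \<noteq> {} \<longrightarrow> (\<exists>u. covered n s i v u))"

text \<open>Random Edge: re_dist n s v0 k u is the probability that the walk started at v0
is at the non-sink vertex u after k steps (the walk stops at the global sink).\<close>
fun re_dist :: "nat \<Rightarrow> (nat set \<Rightarrow> nat set) \<Rightarrow> nat set \<Rightarrow> nat \<Rightarrow> nat set \<Rightarrow> real" where
  "re_dist n s v0 0 u = (if u = v0 \<and> s u \<noteq> {} then 1 else 0)"
| "re_dist n s v0 (Suc k) u =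
     (if s u \<noteq> {} then
        (\<Sum>w\<in>cube n. \<Sum>j\<in>s w. if sdiff w {j} = u then re_dist n s v0 k w / real (card (s w)) else 0)
      else 0)"

text \<open>Expected number of steps T = \<Sum>_k P(X_k is not the global sink) = \<Sum>_k P(T > k).\<close>
definition RE_expected_steps :: "nat \<Rightarrow> (nat set \<Rightarrow> nat set) \<Rightarrow> nat set \<Rightarrow> ennreal" where
  "RE_expected_steps n s v0 = (\<Sum>k. ennreal (\<Sum>u\<in>cube n. re_dist n s v0 k u))"

end

theory Submission
  imports Defs
begin

text \<open>The size of the reachmap is a potential with values in {0..n} that never increases
along arcs. In an i-nice orientation every non-sink w has a directed path of length
m \<le> i to a vertex of strictly smaller potential, and Random Edge follows this path with
probability at least n^{-m}. Hence every block of i steps started at a non-sink lowers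
the expected potential by at least n^{-i}; since the probability of not yet being absorbed
decreases, summing over blocks bounds the expected running time by i n^{i+1}.\<close>

text \<open>(re_op s ^^ k) h x is the expectation of h at the position of Random Edge after k
steps from x, where a walk that has stopped at a sink contributes 0.\<close>

definition re_op :: "(nat set \<Rightarrow> nat set) \<Rightarrow> (nat set \<Rightarrow> real) \<Rightarrow> nat set \<Rightarrow> real" where
  "re_op s h x = (\<Sum>j\<in>s x. h (sdiff x {j})) / real (card (s x))"

definition nonsink :: "(nat set \<Rightarrow> nat set) \<Rightarrow> nat set \<Rightarrow> real" where
  "nonsink s x = (if s x = {} then 0 else 1)"

lemma re_op_sink: "s x = {} \<Longrightarrow> re_op s h x = 0"
  by (simp add: re_op_def)

lemma re_op_pow_Suc:
  "(re_op s ^^ Suc k) h x = (\<Sum>j\<in>s x. (re_op s ^^ k) h (sdiff x {j})) / real (card (s x))"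
  by (simp add: re_op_def)

lemma re_op_pow_nonneg: "(\<And>x. h x \<ge> 0) \<Longrightarrow> (re_op s ^^ k) h x \<ge> 0"
  by (induction k arbitrary: x) (auto simp: re_op_def intro!: divide_nonneg_nonneg sum_nonneg)

lemma re_op_pow_add:
  "(re_op s ^^ k) (\<lambda>x. g x + h x) y = (re_op s ^^ k) g y + (re_op s ^^ k) h y"
proof (induction k arbitrary: y)
  case (Suc k)
  then show ?case by (simp add: re_op_def sum.distrib add_divide_distrib)
qed simp

lemma re_op_pow_scale: "(re_op s ^^ k) (\<lambda>x. c * g x) y = c * (re_op s ^^ k) g y"
proof (induction k arbitrary: y)
  case (Suc k)
  then show ?case by (simp add: re_op_def sum_distrib_left)
qed simp

lemma sum_le_of_potential_drop:
  fixes P a :: "nat \<Rightarrow> real"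
  assumes "i \<ge> 1" and "decseq P" and "\<And>t. P t \<ge> 0" and "\<And>t. a t \<ge> 0" and "q \<ge> 0"
    and drop: "\<And>t. q * a (t + i) + P t \<le> q * a t"
  shows "(\<Sum>k<K. P k) \<le> real i * q * a 0"
proof -
  have blocks: "(\<Sum>k<M * i. P k) \<le> real i * (q * a 0 - q * a (M * i))" for M
  proof (induction M)
    case (Suc M)
    have "(\<Sum>k\<in>{M*i..<M*i+i}. P k) \<le> (\<Sum>k\<in>{M*i..<M*i+i}. P (M*i))"
      using \<open>decseq P\<close> by (intro sum_mono) (auto simp: decseq_def)
    also have "\<dots> \<le> real i * (q * a (M*i) - q * a (M*i+i))"
      using drop[of "M*i"] by (simp add: mult_left_mono)
    finally have "(\<Sum>k\<in>{M*i..<M*i+i}. P k) \<le> real i * (q * a (M*i) - q * a (M*i+i))" .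
    moreover have "(\<Sum>k<Suc M * i. P k) = (\<Sum>k<M*i. P k) + (\<Sum>k\<in>{M*i..<M*i+i}. P k)"
      by (simp add: lessThan_atLeast0 sum.atLeastLessThan_concat add.commute)
    ultimately show ?case
      using Suc.IH by (simp add: algebra_simps)
  qed simp
  have "(\<Sum>k<K. P k) \<le> (\<Sum>k<K * i. P k)"
    using assms by (intro sum_mono2) auto
  also have "\<dots> \<le> real i * (q * a 0 - q * a (K * i))"
    by (rule blocks)
  also have "\<dots> \<le> real i * q * a 0"
    using assms by (simp add: algebra_simps)
  finally show ?thesis .
qed

locale cube_orientation =
  fixes n :: nat and s :: "nat set \<Rightarrow> nat set"
  assumes orientation: "is_orientation n s"
begin

lemma outmap_subset: "v \<in> cube n \<Longrightarrow> s v \<subseteq> {..<n}"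
  using orientation unfolding is_orientation_def by auto

lemma finite_cube: "finite (cube n)"
  unfolding cube_def by simp

lemma neighbour_in_cube: "v \<in> cube n \<Longrightarrow> j \<in> s v \<Longrightarrow> sdiff v {j} \<in> cube n"
  using outmap_subset[of v] unfolding cube_def sdiff_def by auto

lemma arcs_iff: "(v, u) \<in> arcs n s \<longleftrightarrow> v \<in> cube n \<and> (\<exists>j\<in>s v. u = sdiff v {j})"
  unfolding arcs_def by auto

lemma reaches_in_cube: "reaches n s w z \<Longrightarrow> w \<in> cube n \<Longrightarrow> z \<in> cube n"
  unfolding reaches_def
  by (induction rule: rtrancl_induct) (auto simp: arcs_iff neighbour_in_cube)

lemma reaches_neighbour:
  assumes "reaches n s w z" and "w \<in> cube n" and "j \<in> s z"
  shows "reaches n s w (sdiff z {j})"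
proof -
  have "(z, sdiff z {j}) \<in> arcs n s"
    using assms reaches_in_cube by (auto simp: arcs_iff)
  with assms(1) show ?thesis
    unfolding reaches_def by (rule rtrancl_into_rtrancl)
qed

lemma re_op_pow_mono:
  assumes "\<And>x. x \<in> cube n \<Longrightarrow> g x \<le> h x" and "x \<in> cube n"
  shows "(re_op s ^^ k) g x \<le> (re_op s ^^ k) h x"
  using assms(2)
proof (induction k arbitrary: x)
  case (Suc k)
  have "(\<Sum>j\<in>s x. (re_op s ^^ k) g (sdiff x {j})) \<le> (\<Sum>j\<in>s x. (re_op s ^^ k) h (sdiff x {j}))"
    using Suc neighbour_in_cube by (intro sum_mono) blast
  then show ?case
    by (simp add: re_op_pow_Suc divide_right_mono del: funpow.simps)
qed (use assms in simp)

lemma re_op_pow_le_on_reachable: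
  assumes "w \<in> cube n" and "c \<ge> 0" and "\<And>z. reaches n s w z \<Longrightarrow> g z \<le> c"
    and "reaches n s w z"
  shows "(re_op s ^^ k) g z \<le> c"
  using assms(4)
proof (induction k arbitrary: z)
  case (Suc k)
  have "(\<Sum>j\<in>s z. (re_op s ^^ k) g (sdiff z {j})) \<le> real (card (s z)) * c"
    using sum_mono[of "s z" _ "\<lambda>_. c"] Suc reaches_neighbour assms(1) by auto
  then show ?case
    using \<open>c \<ge> 0\<close> by (cases "card (s z) = 0") (simp_all add: re_op_pow_Suc pos_divide_le_eq mult.commute del: funpow.simps)
qed (use assms in simp)

text \<open>Following a path of length k to a vertex where g is smaller by 1 costs a factor of
at most n per step, because every vertex has at most n out-neighbours.\<close>

lemma re_op_pow_le_along_path: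
  assumes w: "w \<in> cube n" and c: "c \<ge> 0" and g: "\<And>z. reaches n s w z \<Longrightarrow> g z \<le> c"
    and gu: "g u \<le> c - 1"
  shows "(x, u) \<in> arcs n s ^^ k \<Longrightarrow> reaches n s w x \<Longrightarrow> (re_op s ^^ k) g x \<le> c - 1 / real n ^ k"
proof (induction k arbitrary: x)
  case (Suc k)
  obtain y where xy: "(x, y) \<in> arcs n s" and yu: "(y, u) \<in> arcs n s ^^ k"
    using relpow_Suc_D2[OF Suc.prems(1)] by blast
  obtain j0 where x: "x \<in> cube n" and j0: "j0 \<in> s x" and y: "y = sdiff x {j0}"
    using xy by (auto simp: arcs_iff)
  have "reaches n s w y"
    using Suc.prems(2) xy unfolding reaches_def by (rule rtrancl_into_rtrancl)
  define G where "G = (re_op s ^^ k) g"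
  define D where "D = 1 / real n ^ k"
  define m where "m = card (s x)"
  have "finite (s x)"
    using outmap_subset[OF x] finite_subset by blast
  have m: "1 \<le> m" "m \<le> n"
    using j0 \<open>finite (s x)\<close> card_mono[OF _ outmap_subset[OF x]]
    by (auto simp: m_def Suc_le_eq card_gt_0_iff)
  have "G y \<le> c - D"
    unfolding G_def D_def using Suc.IH[OF yu \<open>reaches n s w y\<close>] .
  moreover have "(\<Sum>j\<in>s x - {j0}. G (sdiff x {j})) \<le> (real m - 1) * c"
    using sum_mono[of "s x - {j0}" "\<lambda>j. G (sdiff x {j})" "\<lambda>_. c"]
      re_op_pow_le_on_reachable[OF w c g reaches_neighbour[OF Suc.prems(2) w]]
      \<open>finite (s x)\<close> j0 m
    by (simp add: G_def m_def card_Diff_singleton of_nat_diff)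
  ultimately have "(\<Sum>j\<in>s x. G (sdiff x {j})) \<le> real m * c - D"
    using sum.remove[OF \<open>finite (s x)\<close> j0, of "\<lambda>j. G (sdiff x {j})"] y
    by (simp add: algebra_simps)
  then have "(re_op s ^^ Suc k) g x \<le> (real m * c - D) / real m"
    unfolding re_op_pow_Suc G_def m_def by (simp add: divide_right_mono)
  also have "\<dots> = c - D / real m"
    using m by (simp add: field_simps)
  also have "\<dots> \<le> c - D / real n"
    using m by (simp add: D_def frac_le)
  finally show ?case
    by (simp add: D_def mult.commute)
qed (use gu in simp)

definition potential :: "nat set \<Rightarrow> real" where
  "potential x = real (card (reachmap n s x))"

lemma reachmap_subset: "w \<in> cube n \<Longrightarrow> reachmap n s w \<subseteq> {..<n}"
  unfolding reachmap_def using outmap_subset reaches_in_cube by blast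

lemma reachmap_antimono: "reaches n s w z \<Longrightarrow> reachmap n s z \<subseteq> reachmap n s w"
  unfolding reachmap_def reaches_def by (auto intro: rtrancl_trans)

lemma potential_antimono: "reaches n s w z \<Longrightarrow> w \<in> cube n \<Longrightarrow> potential z \<le> potential w"
  unfolding potential_def using reachmap_antimono reachmap_subset
  by (meson card_mono finite_lessThan finite_subset of_nat_le_iff)

lemma potential_le: "w \<in> cube n \<Longrightarrow> potential w \<le> n"
  unfolding potential_def using reachmap_subset card_mono[of "{..<n}"] by fastforce

lemma re_op_pow_potential_le: "w \<in> cube n \<Longrightarrow> (re_op s ^^ k) potential w \<le> potential w"
  using re_op_pow_le_on_reachable[of w "potential w" potential] potential_antimono
  by (simp add: potential_def reaches_def)

lemma potential_drop:
  assumes nice: "nice n s i" and w: "w \<in> cube n"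
  shows "real n ^ i * (re_op s ^^ i) potential w + nonsink s w \<le> real n ^ i * potential w"
proof (cases "s w = {}")
  case True
  then show ?thesis
    using re_op_pow_potential_le[OF w] by (simp add: nonsink_def mult_left_mono)
next
  case False
  obtain u m where "m \<le> i" and wu: "(w, u) \<in> arcs n s ^^ m"
    and smaller: "reachmap n s u \<subset> reachmap n s w"
    using nice w False unfolding nice_def covered_def dist_le_def by blast
  have "reaches n s w u"
    unfolding reaches_def using wu by (rule relpow_imp_rtrancl)
  then have u: "u \<in> cube n"
    using reaches_in_cube w by blast
  have "card (reachmap n s u) < card (reachmap n s w)"
    using smaller reachmap_subset[OF w] by (meson finite_lessThan finite_subset psubset_card_mono)
  then have "(re_op s ^^ (i - m)) potential u \<le> potential w - 1"
    using re_op_pow_potential_le[OF u, of "i - m"] by (simp add: potential_def)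
  then have "(re_op s ^^ m) ((re_op s ^^ (i - m)) potential) w \<le> potential w - 1 / real n ^ m"
    using potential_antimono w re_op_pow_le_on_reachable[OF w]
    by (intro re_op_pow_le_along_path[OF w _ _ _ wu]) (auto simp: potential_def reaches_def)
  moreover have "re_op s ^^ i = re_op s ^^ m \<circ> re_op s ^^ (i - m)"
    using \<open>m \<le> i\<close> by (metis funpow_add le_add_diff_inverse)
  ultimately have drop: "(re_op s ^^ i) potential w \<le> potential w - 1 / real n ^ m"
    by simp
  have "1 \<le> n"
    using False outmap_subset[OF w] by (auto simp: Suc_le_eq)
  then have "1 \<le> real n ^ i / real n ^ m"
    using \<open>m \<le> i\<close> by (simp add: power_increasing)
  have "real n ^ i * (re_op s ^^ i) potential w \<le> real n ^ i * potential w - real n ^ i / real n ^ m"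
    using mult_left_mono[OF drop, of "real n ^ i"] by (simp add: right_diff_distrib)
  with \<open>1 \<le> real n ^ i / real n ^ m\<close> False show ?thesis
    by (simp add: nonsink_def)
qed

lemma re_op_nonsink_le: "x \<in> cube n \<Longrightarrow> re_op s (nonsink s) x \<le> nonsink s x"
  using re_op_pow_le_on_reachable[of x 1 "nonsink s" x 1]
  by (cases "s x = {}") (auto simp: nonsink_def reaches_def re_op_sink)

text \<open>The walk is absorbed at sinks, which is why the test function is cut off by
nonsink before the operator is iterated.\<close>

lemma re_dist_sum_eq:
  assumes v0: "v0 \<in> cube n"
  shows "(\<Sum>u\<in>cube n. re_dist n s v0 k u * g u) = (re_op s ^^ k) (\<lambda>u. nonsink s u * g u) v0"
proof (induction k arbitrary: g)
  case 0
  have "(\<Sum>u\<in>cube n. re_dist n s v0 0 u * g u) = (\<Sum>u\<in>cube n. if u = v0 then nonsink s u * g u else 0)"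
    by (rule sum.cong) (auto simp: nonsink_def)
  then show ?case
    using v0 finite_cube by simp
next
  case (Suc k)
  let ?r = "re_dist n s v0 k"
  let ?F = "\<lambda>u w j. if sdiff w {j} = u then ?r w / real (card (s w)) * (nonsink s u * g u) else 0"
  have "(\<Sum>u\<in>cube n. re_dist n s v0 (Suc k) u * g u) = (\<Sum>u\<in>cube n. \<Sum>w\<in>cube n. \<Sum>j\<in>s w. ?F u w j)"
  proof (intro sum.cong refl)
    fix u
    show "re_dist n s v0 (Suc k) u * g u = (\<Sum>w\<in>cube n. \<Sum>j\<in>s w. ?F u w j)"
      by (cases "s u = {}")
         (auto simp: nonsink_def sum_distrib_right cong: if_cong split: if_split_asm
           intro!: sum.cong sum.neutral)
  qed
  also have "\<dots> = (\<Sum>w\<in>cube n. \<Sum>j\<in>s w. \<Sum>u\<in>cube n. ?F u w j)"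
    by (subst sum.swap) (intro sum.cong refl sum.swap)
  also have "\<dots> = (\<Sum>w\<in>cube n. ?r w * re_op s (\<lambda>u. nonsink s u * g u) w)"
    by (intro sum.cong refl)
       (simp add: neighbour_in_cube finite_cube re_op_def sum_distrib_left sum_divide_distrib)
  also have "\<dots> = (re_op s ^^ k) (\<lambda>u. nonsink s u * re_op s (\<lambda>u. nonsink s u * g u) u) v0"
    by (rule Suc.IH)
  also have "(\<lambda>u. nonsink s u * re_op s (\<lambda>u. nonsink s u * g u) u) = re_op s (\<lambda>u. nonsink s u * g u)"
    by (auto simp: nonsink_def re_op_sink)
  finally show ?case
    by (simp add: funpow_Suc_right del: funpow.simps)
qed

lemma survival_sum_le:
  assumes "nice n s i" and "i \<ge> 1" and v0: "v0 \<in> cube n"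
  shows "(\<Sum>k<K. (re_op s ^^ k) (nonsink s) v0) \<le> real i * real n ^ (i + 1)"
proof -
  let ?P = "\<lambda>t. (re_op s ^^ t) (nonsink s) v0" and ?a = "\<lambda>t. (re_op s ^^ t) potential v0"
  have "?a t \<ge> 0" for t
    by (rule re_op_pow_nonneg) (simp add: potential_def)
  moreover have "?P t \<ge> 0" for t
    by (rule re_op_pow_nonneg) (simp add: nonsink_def)
  moreover have "decseq ?P"
    using re_op_pow_mono[OF re_op_nonsink_le v0]
    by (intro decseq_SucI) (simp add: funpow_Suc_right del: funpow.simps)
  moreover have "real n ^ i * ?a (t + i) + ?P t \<le> real n ^ i * ?a t" for t
    using re_op_pow_mono[OF potential_drop[OF \<open>nice n s i\<close>] v0, of _ t]
    by (simp add: re_op_pow_add re_op_pow_scale funpow_add del: funpow.simps)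
  ultimately have "(\<Sum>k<K. ?P k) \<le> real i * real n ^ i * ?a 0"
    using \<open>i \<ge> 1\<close> by (intro sum_le_of_potential_drop) auto
  also have "\<dots> \<le> real i * real n ^ i * real n"
    using potential_le[OF v0] by (simp add: mult_left_mono)
  finally show ?thesis
    by (simp add: algebra_simps)
qed

end

theorem theorem4:
  fixes i :: nat
  assumes "i \<ge> 1"
  shows "\<exists>C::real. C > 0 \<and>
    (\<forall>n s v. USO n s \<longrightarrow> nice n s i \<longrightarrow> v \<in> cube n \<longrightarrow>
       RE_expected_steps n s v \<le> ennreal (C * real n ^ (i + 1)))"
proof (intro exI[of _ "real i"] conjI allI impI)
  show "real i > 0"
    using assms by simp
  fix n s v
  assume "USO n s" and nice: "nice n s i" and v: "v \<in> cube n"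
  then interpret cube_orientation n s
    by unfold_locales (simp add: USO_def)
  have survival: "(\<Sum>u\<in>cube n. re_dist n s v k u) = (re_op s ^^ k) (nonsink s) v" for k
    using re_dist_sum_eq[OF v, of k "\<lambda>_. 1"] by simp
  have "(\<Sum>k<K. ennreal ((re_op s ^^ k) (nonsink s) v)) \<le> ennreal (real i * real n ^ (i + 1))" for K
  proof -
    have "(\<Sum>k<K. ennreal ((re_op s ^^ k) (nonsink s) v)) = ennreal (\<Sum>k<K. (re_op s ^^ k) (nonsink s) v)"
      using re_op_pow_nonneg[of "nonsink s"] by (simp add: nonsink_def)
    then show ?thesis
      using survival_sum_le[OF nice assms v, of K] by (simp add: ennreal_leI)
  qed
  then show "RE_expected_steps n s v \<le> ennreal (real i * real n ^ (i + 1))"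
    unfolding RE_expected_steps_def survival by (intro suminf_le_const) auto
qed

end
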